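(* Let $Y_1,Y_2,\ldots$ be i.i.d. Bernoulli$(1/2)$ and let $(Z^k)_k$ be generated by the bit-drop scheme described in the context, independently of $(Y_i)$; let $L^a_n(k)$ be the length of a longest common subsequence of $Z^k$ and $Y_1\ldots Y_n$. There is a constant $c>0$ such that for every $n$ and every $\nu<0.5$ with $\nu n$ a nonnegative integer, $$P\big(L^a_n(\nu n)=\nu n\big)\geq 1-e^{-c(0.5-\nu)^2n}.$$
   Context: Bit-drop scheme: let $V_1,V_2,\ldots$ be i.i.d. Bernoulli$(1/2)$ and let $T_3,T_4,\ldots$ be independent, independent of $(V_k)$, with $T_{k+1}$ uniform on $\{2,\ldots,k\}$. Set $Z^2:=V_1V_2$ and, given $Z^k=Z^k_1\ldots Z^k_k$, define $Z^{k+1}_j:=Z^k_j$ for $j<T_{k+1}$, $Z^{k+1}_{T_{k+1}}:=V_{k+1}$, $Z^{k+1}_j:=Z^k_{j-1}$ for $T_{k+1}<j\le k+1$. Convention: $Z^0$ empty, $Z^1:=V_1$. *)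

theory Defs
  imports "HOL-Probability.Probability" "HOL-Library.Sublist"
begin

text \<open>A fair bit: Bernoulli(1/2), bits encoded as bool (True = 1).\<close>
definition coin :: "bool pmf" where
  "coin = bernoulli_pmf (1/2)"

text \<open>Z^0 empty, Z^1 = V1, Z^2 = V1 V2,
  and Z^(k+1) is obtained from Z^k (k >= 2) by inserting a fresh independent fair bit
  V_(k+1) at (1-based) position T_(k+1), T_(k+1) uniform on {2..k}, independent of everything.\<close>
fun Zpmf :: "nat \<Rightarrow> bool list pmf" where
  "Zpmf 0 = return_pmf []"
| "Zpmf (Suc 0) = map_pmf (\<lambda>v. [v]) coin"
| "Zpmf (Suc (Suc 0)) = bind_pmf (Zpmf (Suc 0)) (\<lambda>z. map_pmf (\<lambda>v. z @ [v]) coin)"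
| "Zpmf (Suc (Suc (Suc m))) =
     bind_pmf (Zpmf (Suc (Suc m))) (\<lambda>z.
     bind_pmf (pmf_of_set {2..Suc (Suc m)}) (\<lambda>t.
     map_pmf (\<lambda>v. take (t - 1) z @ v # drop (t - 1) z) coin))"

fun Ypmf :: "nat \<Rightarrow> bool list pmf" where
  "Ypmf 0 = return_pmf []"
| "Ypmf (Suc n) = bind_pmf (Ypmf n) (\<lambda>ys. map_pmf (\<lambda>y. ys @ [y]) coin)"

definition lcs_len :: "'a list \<Rightarrow> 'a list \<Rightarrow> nat" where
  "lcs_len xs ys = Max {length zs | zs. subseq zs xs \<and> subseq zs ys}"

end

theory Submission
  imports Defs
begin

text \<open>Since \<open>Z\<^sup>k\<close> is independent of \<open>Y\<close> and has length \<open>k\<close>, the probability that \<open>L = k\<close> is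
  at least the average over \<open>z\<close> of the probability that \<open>z\<close> is a subsequence of \<open>Y\<^sub>1 \<dots> Y\<^sub>n\<close>.
  By greedy embedding this probability is the same for every word of length \<open>k\<close>, namely
  \<open>P(Bin(n, 1/2) \<ge> k)\<close>. A Chernoff bound with
  weight \<open>l = 1 - d/2\<close>, where \<open>d = 1/2 - \<nu>\<close>, bounds the complementary tail by \<open>exp (- d\<^sup>2 n / 4)\<close>.\<close>

lemma subseq_snoc2_iff:
  "subseq (xs @ [x]) (ys @ [y]) \<longleftrightarrow> (if x = y then subseq xs ys else subseq (xs @ [x]) ys)"
proof
  assume "subseq (xs @ [x]) (ys @ [y])"
  then obtain us vs where split: "ys @ [y] = us @ vs" and "subseq xs us" and "subseq [x] vs"
    using list_emb_appendD by blast
  then have "vs \<noteq> []"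
    by auto
  then obtain vs' where vs: "vs = vs' @ [y]" and ys: "ys = us @ vs'"
    using split by (cases vs rule: rev_cases) auto
  show "if x = y then subseq xs ys else subseq (xs @ [x]) ys"
  proof (cases "x \<in> set vs'")
    case True
    then have "subseq (xs @ [x]) ys"
      using \<open>subseq xs us\<close> ys by (simp add: list_emb_append_mono subseq_singleton_left)
    then show ?thesis
      by (auto dest: list_emb_appendD)
  next
    case False
    with \<open>subseq [x] vs\<close> vs have "x = y"
      by (auto simp: subseq_singleton_left)
    with \<open>subseq xs us\<close> ys show ?thesis
      by auto
  qed
next
  assume "if x = y then subseq xs ys else subseq (xs @ [x]) ys"
  then show "subseq (xs @ [x]) (ys @ [y])"
    by (auto split: if_splits intro: list_emb_append_mono subseq_rev_drop_many)
qed

lemma measure_bind_pmf: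
  "measure_pmf.prob (bind_pmf M N) X = measure_pmf.expectation M (\<lambda>x. measure_pmf.prob (N x) X)"
  by (simp add: measure_pmf_bind measure_pmf.measure_bind[where N="count_space UNIV"]
      measure_pmf_in_subprob_algebra)

lemma measure_pair_pmf:
  "measure_pmf.prob (pair_pmf M N) A = measure_pmf.expectation M (\<lambda>x. measure_pmf.prob N (Pair x -` A))"
proof -
  have "pair_pmf M N = bind_pmf M (\<lambda>x. map_pmf (Pair x) N)"
    by (simp add: pair_pmf_def map_pmf_def)
  then show ?thesis
    by (simp add: measure_bind_pmf)
qed

lemma prob_Ypmf_Suc:
  "measure_pmf.prob (Ypmf (Suc n)) A =
     (measure_pmf.prob (Ypmf n) {ys. ys @ [True] \<in> A} + measure_pmf.prob (Ypmf n) {ys. ys @ [False] \<in> A}) / 2"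
proof -
  have "Ypmf (Suc n) = bind_pmf coin (\<lambda>y. map_pmf (\<lambda>ys. ys @ [y]) (Ypmf n))"
    by (simp add: map_pmf_def bind_commute_pmf[of "Ypmf n"])
  then show ?thesis
    by (simp add: measure_bind_pmf coin_def vimage_def)
qed

fun embed_prob :: "nat \<Rightarrow> nat \<Rightarrow> real" where
  "embed_prob n 0 = 1"
| "embed_prob 0 (Suc m) = 0"
| "embed_prob (Suc n) (Suc m) = (embed_prob n m + embed_prob n (Suc m)) / 2"

lemma prob_subseq_Ypmf: "measure_pmf.prob (Ypmf n) {y. subseq z y} = embed_prob n (length z)"
proof (induction n arbitrary: z)
  case 0
  then show ?case
    by (cases z) auto
next
  case (Suc n)
  show ?case
  proof (cases z rule: rev_cases)
    case Nil
    then show ?thesis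
      by simp
  next
    case (snoc z' b)
    have extend: "{ys. ys @ [c] \<in> {y. subseq z y}} = (if c = b then {ys. subseq z' ys} else {ys. subseq z ys})"
      for c
      by (auto simp: snoc subseq_snoc2_iff)
    show ?thesis
      unfolding prob_Ypmf_Suc extend using Suc.IH by (cases b) (simp_all add: snoc)
  qed
qed

lemma length_Zpmf: "z \<in> set_pmf (Zpmf k) \<Longrightarrow> length z = k"
  by (induction k arbitrary: z rule: Zpmf.induct) auto

lemma lcs_len_eq_length: "subseq xs ys \<Longrightarrow> lcs_len xs ys = length xs"
  unfolding lcs_len_def
proof (rule Max_eqI)
  have "{length zs |zs. subseq zs xs \<and> subseq zs ys} \<subseteq> {..length xs}"
    by (auto dest: list_emb_length)
  then show "finite {length zs |zs. subseq zs xs \<and> subseq zs ys}"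
    using finite_subset by blast
qed (auto dest: list_emb_length)

lemma embed_prob_le_prob_lcs_len:
  "embed_prob n k \<le> measure_pmf.prob (pair_pmf (Zpmf k) (Ypmf n)) {(z, y). lcs_len z y = k}"
proof -
  have "embed_prob n k = measure_pmf.expectation (Zpmf k) (\<lambda>z. measure_pmf.prob (Ypmf n) {y. subseq z y})"
    by (subst integral_cong_AE[where g="\<lambda>_. embed_prob n k"])
       (auto simp: AE_measure_pmf_iff length_Zpmf prob_subseq_Ypmf)
  also have "\<dots> = measure_pmf.prob (pair_pmf (Zpmf k) (Ypmf n)) {(z, y). subseq z y}"
    by (simp add: measure_pair_pmf vimage_def)
  also have "\<dots> \<le> measure_pmf.prob (pair_pmf (Zpmf k) (Ypmf n)) {(z, y). lcs_len z y = k}"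
    by (rule measure_pmf.finite_measure_mono_AE)
       (auto simp: AE_measure_pmf_iff length_Zpmf lcs_len_eq_length)
  finally show ?thesis .
qed

text \<open>Chernoff bound for \<open>P(Bin(n, 1/2) < m)\<close>: weighting by \<open>l\<^sup>m\<close> turns the recursion of
  \<open>embed_prob\<close> into that of the moment generating function \<open>((1 + l) / 2)\<^sup>n\<close>.\<close>
lemma embed_prob_chernoff:
  fixes l :: real
  assumes "0 \<le> l" "l \<le> 1"
  shows "(1 - embed_prob n m) * l ^ m \<le> ((1 + l) / 2) ^ n"
proof (induction n arbitrary: m)
  case 0
  then show ?case
    using assms power_le_one[of l m] by (cases m) auto
next
  case (Suc n)
  show ?case
  proof (cases m)
    case 0
    then show ?thesis
      using assms by simp
  next
    case (Suc m')
    have "(1 - embed_prob (Suc n) m) * l ^ m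
        = ((1 - embed_prob n m') * l ^ m') * l / 2 + (1 - embed_prob n (Suc m')) * l ^ Suc m' / 2"
      using Suc by (simp add: field_simps)
    also have "\<dots> \<le> ((1 + l) / 2) ^ n * l / 2 + ((1 + l) / 2) ^ n / 2"
      using Suc.IH[of m'] Suc.IH[of "Suc m'"] assms
      by (intro add_mono divide_right_mono mult_right_mono) auto
    also have "\<dots> = ((1 + l) / 2) ^ Suc n"
      by (simp add: field_simps)
    finally show ?thesis .
  qed
qed

lemma one_minus_embed_prob_le_exp:
  assumes "0 < d" "d \<le> 1/2" and m: "real m = (1/2 - d) * real n"
  shows "1 - embed_prob n m \<le> exp (- (1/4) * d\<^sup>2 * real n)"
proof -
  define l where "l = 1 - d/2"
  have "0 < l"
    using assms by (simp add: l_def)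
  have l_lower: "exp (- (d/2 + d\<^sup>2/2)) \<le> l"
  proof -
    have "- (d/2) - 2 * (d/2)\<^sup>2 \<le> ln l"
      unfolding l_def using assms by (intro ln_one_minus_pos_lower_bound) auto
    then show ?thesis
      using \<open>0 < l\<close> by (simp add: power2_eq_square ln_ge_iff)
  qed
  have mgf_upper: "(1 + l) / 2 \<le> exp (- d/4)"
    using exp_ge_add_one_self[of "- d/4"] by (simp add: l_def)
  have "1 - embed_prob n m \<le> ((1 + l) / 2) ^ n / l ^ m"
    using embed_prob_chernoff[of l n m] \<open>0 < l\<close> assms by (simp add: l_def pos_le_divide_eq)
  also have "\<dots> \<le> exp (- d/4) ^ n / exp (- (d/2 + d\<^sup>2/2)) ^ m"
    using \<open>0 < l\<close> by (intro frac_le power_mono mgf_upper l_lower) auto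
  also have "\<dots> = exp (real n * (- d/4) - real m * (- (d/2 + d\<^sup>2/2)))"
    by (simp only: exp_diff exp_of_nat_mult)
  also have "\<dots> = exp (- (1/4) * d\<^sup>2 * real n - d^3/2 * real n)"
    unfolding m by (simp add: power2_eq_square power3_eq_cube algebra_simps)
  also have "\<dots> \<le> exp (- (1/4) * d\<^sup>2 * real n)"
    using assms by simp
  finally show ?thesis .
qed

theorem lemma14:
  shows "\<exists>c::real. c > 0 \<and>
    (\<forall>(n::nat) (\<nu>::real) (k::nat). \<nu> < 1/2 \<and> \<nu> * real n = real k \<longrightarrow>
      measure_pmf.prob (pair_pmf (Zpmf k) (Ypmf n)) {(z, y). lcs_len z y = k}
        \<ge> 1 - exp (- c * (1/2 - \<nu>)^2 * real n))"
proof (intro exI[of _ "1/4"] conjI allI impI)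
  fix n k :: nat and \<nu> :: real
  assume \<nu>: "\<nu> < 1/2 \<and> \<nu> * real n = real k"
  have "1 - exp (- (1/4) * (1/2 - \<nu>)^2 * real n) \<le> embed_prob n k"
  proof (cases "k = 0")
    case True
    then show ?thesis
      by simp
  next
    case False
    with \<nu> have "0 < \<nu> * real n"
      by simp
    then have "0 < \<nu>"
      by (simp add: zero_less_mult_iff)
    with \<nu> have "1 - embed_prob n k \<le> exp (- (1/4) * (1/2 - \<nu>)^2 * real n)"
      by (intro one_minus_embed_prob_le_exp) auto
    then show ?thesis
      by linarith
  qed
  also have "\<dots> \<le> measure_pmf.prob (pair_pmf (Zpmf k) (Ypmf n)) {(z, y). lcs_len z y = k}"
    by (rule embed_prob_le_prob_lcs_len)
  finally show "1 - exp (- (1/4) * (1/2 - \<nu>)^2 * real n)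
      \<le> measure_pmf.prob (pair_pmf (Zpmf k) (Ypmf n)) {(z, y). lcs_len z y = k}" .
qed simp

end
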